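(* Let $p>2$ be a prime and $n>2$ an integer, and let $G(p,n)=\langle x,y\mid x^{p^n}=1,\ y^{p^{n-1}}=1,\ yxy^{-1}=x^{p+1}\rangle\cong\mathbb{Z}_{p^n}\rtimes\mathbb{Z}_{p^{n-1}}$. Then $G(p,n)$ is a finite nilpotent group of nilpotency class at least $n-1$, and $[e]_\varphi$ is a subgroup of $G(p,n)$ for every inner automorphism $\varphi$ of $G(p,n)$. Consequently, if $p_n$ denotes the $n$-th prime, the direct product $G=\prod_{n>2}G(p_n,n)$ is a residually nilpotent, non-nilpotent group such that $[e]_\varphi$ is a subgroup of $G$ for every inner automorphism $\varphi$ of $G$.
   Context: For an automorphism $\varphi$ of a group $G$, $[e]_\varphi=\{z^{-1}\varphi(z)\mid z\in G\}$. A group $G$ is residually nilpotent if $\bigcap_k\gamma_k(G)=\{e\}$, where $\gamma_1(G)=G$, $\gamma_{k+1}(G)=[\gamma_k(G),G]$, $[x,y]=x^{-1}y^{-1}xy$. *)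

theory Defs
  imports "HOL-Algebra.Algebra" "HOL-Computational_Algebra.Primes" "HOL-Library.Infinite_Set"
begin

definition comm :: "('a, 'b) monoid_scheme \<Rightarrow> 'a \<Rightarrow> 'a \<Rightarrow> 'a" where
  "comm G x y = inv\<^bsub>G\<^esub> x \<otimes>\<^bsub>G\<^esub> inv\<^bsub>G\<^esub> y \<otimes>\<^bsub>G\<^esub> x \<otimes>\<^bsub>G\<^esub> y"

text \<open>Lower central series, 1-indexed: gamma G 1 = G, gamma G (k+1) = [gamma G k, G].
  (gamma G 0 is set to G as well; it plays no role.)\<close>
fun gamma :: "('a, 'b) monoid_scheme \<Rightarrow> nat \<Rightarrow> 'a set" where
  "gamma G 0 = carrier G"
| "gamma G (Suc 0) = carrier G"
| "gamma G (Suc (Suc k)) =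
     generate G {comm G x y | x y. x \<in> gamma G (Suc k) \<and> y \<in> carrier G}"

definition nilpotent_grp :: "('a, 'b) monoid_scheme \<Rightarrow> bool" where
  "nilpotent_grp G \<longleftrightarrow> (\<exists>c. gamma G (Suc c) = {\<one>\<^bsub>G\<^esub>})"

definition nilpotency_class :: "('a, 'b) monoid_scheme \<Rightarrow> nat" where
  "nilpotency_class G = (LEAST c. gamma G (Suc c) = {\<one>\<^bsub>G\<^esub>})"

definition residually_nilpotent :: "('a, 'b) monoid_scheme \<Rightarrow> bool" where
  "residually_nilpotent G \<longleftrightarrow> (\<Inter>k\<in>{1..}. gamma G k) = {\<one>\<^bsub>G\<^esub>}"

definition inner_aut :: "('a, 'b) monoid_scheme \<Rightarrow> 'a \<Rightarrow> 'a \<Rightarrow> 'a" where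
  "inner_aut G g = (\<lambda>z\<in>carrier G. g \<otimes>\<^bsub>G\<^esub> z \<otimes>\<^bsub>G\<^esub> inv\<^bsub>G\<^esub> g)"

definition inner_auts :: "('a, 'b) monoid_scheme \<Rightarrow> ('a \<Rightarrow> 'a) set" where
  "inner_auts G = inner_aut G ` carrier G"

definition twisted_class_e :: "('a, 'b) monoid_scheme \<Rightarrow> ('a \<Rightarrow> 'a) \<Rightarrow> 'a set" where
  "twisted_class_e G \<phi> = {inv\<^bsub>G\<^esub> z \<otimes>\<^bsub>G\<^esub> \<phi> z | z. z \<in> carrier G}"

text \<open>G(p,n) = Z_{p^n} \<rtimes> Z_{p^(n-1)}, where the generator y of Z_{p^(n-1)} acts on Z_{p^n}
  by multiplication by p+1.  The pair (a,b) stands for x^a y^b, so that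
  (x^a y^b)(x^c y^d) = x^(a + (p+1)^b c) y^(b+d).\<close>
definition Gpn :: "nat \<Rightarrow> nat \<Rightarrow> (nat \<times> nat) monoid" where
  "Gpn p n = \<lparr>carrier = {0..<p^n} \<times> {0..<p^(n-1)},
              monoid.mult = (\<lambda>(a,b) (c,d). ((a + (p+1)^b * c) mod p^n, (b + d) mod p^(n-1))),
              one = (0, 0)\<rparr>"

text \<open>n-th prime, 1-indexed: nth_prime 1 = 2, nth_prime 2 = 3, ...\<close>
definition nth_prime :: "nat \<Rightarrow> nat" where
  "nth_prime n = enumerate {p::nat. Factorial_Ring.prime p} (n - 1)"

end

theory Submission
  imports Defs "HOL-Number_Theory.Number_Theory"
begin

text \<open>
  Write q = p + 1, so that y x y^-1 = x^q in G(p,n). Every commutator is a power of x: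
  [x^a y^b, x^c y^d] = x^e with e = q^(-b-d) ((q^b - 1) c - (q^d - 1) a). Since q = 1 mod p,
  commutators with elements of <x^(p^k)> lie in <x^(p^(k+1))>, while [x^(p^k), y^-1] = x^(p^(k+1));
  hence gamma_(k+1) = <x^(p^k)> and the nilpotency class is exactly n.

  For the inner automorphism phi given by g, the set [e]_phi consists of the commutators [z, g^-1].
  For fixed w = x^c y^d and z = x^a y^b the exponent above is q^-d ((1 - q^-b) c - (q^d - 1) q^-b a).
  By lifting the exponent, q has order p^(n-1) modulo p^n, so its powers are exactly the residues
  congruent to 1 mod p: 1 - q^-b runs through all multiples of p, independently of the arbitrary
  a. Hence these commutators form the subgroup <x^(p q^-d c), x^(q^-d (q^d - 1))>.

  In a direct product, the lower central series and these commutator sets are computed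
  componentwise. The factor with index c + 3 has class c + 3, so no gamma_(c+1) of the product is
  trivial, while every component of an element of the intersection of all gamma_k is trivial.
\<close>

section \<open>Powers of p + 1 modulo powers of p\<close>

lemma one_plus_power_expansion:
  fixes e :: int
  shows "\<exists>r. (1 + e)^i = 1 + int i * e + int (i choose 2) * e^2 + e^3 * r"
proof (induction i)
  case 0
  show ?case by (rule exI[of _ 0]) simp
next
  case (Suc i)
  then obtain r where r: "(1 + e)^i = 1 + int i * e + int (i choose 2) * e^2 + e^3 * r" by blast
  have "Suc i choose 2 = (i choose 2) + i" by (simp add: numeral_2_eq_2)
  then show ?case
    by (intro exI[of _ "int (i choose 2) + r + r * e"])
       (simp add: r algebra_simps power2_eq_square power3_eq_cube)
qed

lemma cong_pred_square_one: "[k * k = 1] (mod Suc k)"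
proof -
  have "k * k mod Suc k = (k * k + Suc k) mod Suc k" by (rule mod_add_self2[symmetric])
  also have "k * k + Suc k = 1 + Suc k * k" by simp
  also have "(1 + Suc k * k) mod Suc k = 1 mod Suc k" by (rule mod_mult_self2)
  finally show ?thesis by (simp add: cong_def)
qed

lemma lifting_exponent_step:
  fixes v :: int
  assumes p: "Factorial_Ring.prime p" "p > 2" and k: "k \<ge> 1"
  shows "\<exists>v'. (1 + int p^k * v)^p = 1 + int p^(k+1) * v' \<and> [v' = v] (mod int p)"
proof -
  obtain r where r: "(1 + int p^k * v)^p = 1 + int p * (int p^k * v)
      + int (p choose 2) * (int p^k * v)^2 + (int p^k * v)^3 * r"
    using one_plus_power_expansion by blast
  \<comment> \<open>this is where \<open>p\<close> odd is needed\<close>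
  have "p dvd (p choose 2)" using p by (intro dvd_choose_prime) auto
  then obtain c where c: "p choose 2 = p * c" by blast
  obtain k' where k': "k = Suc k'" using k by (cases k) auto
  define v' where "v' = v + int p ^ k * int c * v^2 + int p ^ (2*k'+1) * v^3 * r"
  have "int p ^ (k' * 2) = int p ^ k' * int p ^ k'" by (simp add: power_mult power2_eq_square)
  then have "(1 + int p^k * v)^p = 1 + int p^(k+1) * v'"
    unfolding r unfolding v'_def c k'
    by (simp add: algebra_simps power2_eq_square power3_eq_cube power_add mult_2)
  moreover have "int p dvd v' - v" unfolding v'_def k' by simp
  then have "[v' = v] (mod int p)" by (simp add: cong_iff_dvd_diff)
  ultimately show ?thesis by blast
qed

lemma lifting_exponent:
  assumes p: "Factorial_Ring.prime p" "p > 2"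
  shows "\<exists>v. int (p+1)^(p^j) = 1 + int p^(j+1) * v \<and> [v = 1] (mod int p)"
proof (induction j)
  case 0
  show ?case by (rule exI[of _ 1]) simp
next
  case (Suc j)
  then obtain v where v: "int (p+1)^(p^j) = 1 + int p^(j+1) * v" "[v = 1] (mod int p)" by blast
  obtain v' where v': "(1 + int p^(j+1) * v)^p = 1 + int p^(j+2) * v'" "[v' = v] (mod int p)"
    using lifting_exponent_step[OF p, of "j+1" v] by auto
  have "int (p+1)^(p^Suc j) = (int (p+1)^(p^j))^p" by (simp add: power_mult[symmetric] mult.commute)
  also have "\<dots> = 1 + int p^(Suc j+1) * v'" using v(1) v'(1) by simp
  finally show ?case using v(2) v'(2) cong_trans by blast
qed

lemma Suc_prime_power_cong_one:
  assumes "Factorial_Ring.prime p" "p > 2"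
  shows "[(p+1)^(p^j) = 1] (mod p^Suc j)"
proof -
  obtain v where "int (p+1)^(p^j) = 1 + int p^(j+1) * v" using lifting_exponent[OF assms] by blast
  then have "[int ((p+1)^(p^j)) = int 1] (mod int (p^Suc j))" by (simp add: cong_iff_dvd_diff)
  then show ?thesis by (simp only: cong_int_iff)
qed

lemma Suc_prime_power_not_cong_one:
  assumes p: "Factorial_Ring.prime p" "p > 2"
  shows "\<not> [(p+1)^(p^j) = 1] (mod p^(j+2))"
proof
  assume "[(p+1)^(p^j) = 1] (mod p^(j+2))"
  then have "[int ((p+1)^(p^j)) = int 1] (mod int (p^(j+2)))" by (simp only: cong_int_iff)
  then have cong: "[int (p+1)^(p^j) = 1] (mod int p^(j+2))" by simp
  obtain v where v: "int (p+1)^(p^j) = 1 + int p^(j+1) * v" "[v = 1] (mod int p)"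
    using lifting_exponent[OF p] by blast
  have "int p^(j+1) * int p dvd int p^(j+1) * v"
    using cong unfolding v(1) by (simp add: cong_iff_dvd_diff)
  then have "int p dvd v" using p by (simp add: prime_gt_0_nat)
  then have "int p dvd 1" using v(2) cong_dvd_iff by blast
  then show False using p by simp
qed

lemma ord_Suc_prime_power:
  assumes p: "Factorial_Ring.prime p" "p > 2"
  shows "ord (p^Suc j) (p+1) = p^j"
proof -
  have "ord (p^Suc j) (p+1) dvd p^j"
    using Suc_prime_power_cong_one[OF p] ord_divides by blast
  then obtain i where i: "i \<le> j" "ord (p^Suc j) (p+1) = p^i"
    using divides_primepow_nat[OF p(1)] by blast
  have "i = j"
  proof (rule ccontr)
    assume "i \<noteq> j"
    then have "p^i dvd p^(j-1)" using i by (intro le_imp_power_dvd) linarith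
    then have "[(p+1)^(p^(j-1)) = 1] (mod p^Suc j)" using i ord_divides by simp
    then show False using Suc_prime_power_not_cong_one[OF p, of "j-1"] \<open>i \<noteq> j\<close> i
      by (simp add: Suc_diff_Suc numeral_2_eq_2)
  qed
  then show ?thesis using i by simp
qed

lemma image_Suc_prime_powers_mod:
  assumes p: "Factorial_Ring.prime p" "p > 2"
  shows "(\<lambda>b. (p+1)^b mod p^Suc j) ` {..<p^j} = {x. x < p^Suc j \<and> x mod p = 1}"
proof (rule card_subset_eq)
  have p1: "p > 1" using p by linarith
  show "finite {x. x < p^Suc j \<and> x mod p = 1}" by simp
  have "(p+1)^b mod p^Suc j mod p = 1" for b
  proof -
    have "(p+1)^b mod p^Suc j mod p = (p+1)^b mod p" by (simp add: mod_mod_cancel)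
    also have "\<dots> = ((p+1) mod p)^b mod p" by (simp add: power_mod)
    finally show ?thesis using p1 by (simp add: mod_Suc)
  qed
  then show "(\<lambda>b. (p+1)^b mod p^Suc j) ` {..<p^j} \<subseteq> {x. x < p^Suc j \<and> x mod p = 1}"
    using p1 by auto
  have "{x. x < p^Suc j \<and> x mod p = 1} = (\<lambda>i. 1 + p*i) ` {..<p^j}"
  proof (intro equalityI subsetI)
    fix x assume x: "x \<in> {x. x < p^Suc j \<and> x mod p = 1}"
    then have "x = 1 + p * (x div p)" using div_mult_mod_eq[of x p] by (simp add: algebra_simps)
    moreover have "x div p < p^j" using x by (simp add: less_mult_imp_div_less mult.commute)
    ultimately show "x \<in> (\<lambda>i. 1 + p*i) ` {..<p^j}" by blast
  next
    fix x assume "x \<in> (\<lambda>i. 1 + p*i) ` {..<p^j}"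
    then obtain i where i: "i < p^j" "x = 1 + p*i" by auto
    have "p * (i + 1) \<le> p * p^j" using i by (intro mult_le_mono2) simp
    then show "x \<in> {x. x < p^Suc j \<and> x mod p = 1}" using i p1 by (simp add: mod_Suc)
  qed
  moreover have "inj_on (\<lambda>i. 1 + p*i) {..<p^j}" using p1 by (auto simp: inj_on_def)
  ultimately have card_units: "card {x. x < p^Suc j \<and> x mod p = 1} = p^j" by (simp add: card_image)
  have "inj_on (\<lambda>b. (p+1)^b mod p^Suc j) {..<p^j}"
  proof (rule inj_onI)
    fix b b' assume b: "b \<in> {..<p^j}" "b' \<in> {..<p^j}"
      and "(p+1)^b mod p^Suc j = (p+1)^b' mod p^Suc j"
    then have "[(p+1)^b = (p+1)^b'] (mod p^Suc j)" by (simp add: cong_def)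
    moreover have "coprime (p^Suc j) (p+1)" by simp
    ultimately have "[b = b'] (mod p^j)"
      using order_divides_expdiff ord_Suc_prime_power[OF p] by metis
    then show "b = b'" using b by (simp add: cong_def)
  qed
  then show "card ((\<lambda>b. (p+1)^b mod p^Suc j) ` {..<p^j}) = card {x. x < p^Suc j \<and> x mod p = 1}"
    using card_units by (simp add: card_image)
qed

lemma ex_Suc_prime_power_cong:
  assumes p: "Factorial_Ring.prime p" "p > 2"
  shows "\<exists>b. [int (p+1)^b = 1 + int p * s] (mod int p^Suc j)"
proof -
  have p1: "p > 1" using p by linarith
  define x where "x = nat ((1 + int p * s) mod int p^Suc j)"
  have x: "int x = (1 + int p * s) mod int p^Suc j" unfolding x_def using p1 by simp
  have "int x < int (p^Suc j)" unfolding x using p1 by simp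
  then have "x < p^Suc j" by (simp only: of_nat_less_iff)
  moreover have "int (x mod p) = int 1"
    using p1 by (simp add: x zmod_int mod_mod_cancel)
  ultimately have "x \<in> (\<lambda>b. (p+1)^b mod p^Suc j) ` {..<p^j}"
    unfolding image_Suc_prime_powers_mod[OF p] by (simp only: of_nat_eq_iff) simp
  then obtain b where "(p+1)^b mod p^Suc j = x" by blast
  then have "int ((p+1)^b mod p^Suc j) = (1 + int p * s) mod int p^Suc j" using x by simp
  then have "int (p+1)^b mod int p^Suc j = (1 + int p * s) mod int p^Suc j"
    by (simp add: of_nat_mod)
  then show ?thesis by (auto simp: cong_def)
qed

section \<open>Lower central series and twisted classes\<close>

definition commutators_with :: "('a, 'b) monoid_scheme \<Rightarrow> 'a \<Rightarrow> 'a set" where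
  "commutators_with G w = {comm G z w | z. z \<in> carrier G}"

lemma comm_closed:
  assumes "group G" "x \<in> carrier G" "y \<in> carrier G"
  shows "comm G x y \<in> carrier G"
proof -
  interpret group G by fact
  show ?thesis using assms by (simp add: comm_def)
qed

lemma subgroup_gamma: "group G \<Longrightarrow> subgroup (gamma G k) G"
proof (induction G k rule: gamma.induct)
  case (3 G k)
  have "{comm G x y | x y. x \<in> gamma G (Suc k) \<and> y \<in> carrier G} \<subseteq> carrier G"
    using 3 by (auto intro: comm_closed dest: subgroup.mem_carrier)
  then show ?case using 3 by (simp add: group.generate_is_subgroup)
qed (simp_all add: group.subgroup_self)

lemma hom_comm:
  assumes "group_hom G H h" "x \<in> carrier G" "y \<in> carrier G"
  shows "h (comm G x y) = comm H (h x) (h y)"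
proof -
  interpret group_hom G H h by fact
  show ?thesis using assms by (simp add: comm_def)
qed

lemma twisted_class_e_inner_aut:
  assumes G: "group G" and g: "g \<in> carrier G"
  shows "twisted_class_e G (inner_aut G g) = commutators_with G (inv\<^bsub>G\<^esub> g)"
proof -
  interpret group G by fact
  have "inv\<^bsub>G\<^esub> z \<otimes>\<^bsub>G\<^esub> inner_aut G g z = comm G z (inv\<^bsub>G\<^esub> g)" if "z \<in> carrier G" for z
    using that g by (simp add: inner_aut_def comm_def m_assoc)
  then show ?thesis unfolding twisted_class_e_def commutators_with_def by force
qed

lemma subgroup_twisted_class_e_inner_autsI:
  assumes "group G" and "\<And>w. w \<in> carrier G \<Longrightarrow> subgroup (commutators_with G w) G"
  shows "\<forall>\<phi>\<in>inner_auts G. subgroup (twisted_class_e G \<phi>) G"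
  using assms by (auto simp: inner_auts_def twisted_class_e_inner_aut group.inv_closed)

lemma nilpotency_class_eqI:
  assumes "gamma G (Suc c) = {\<one>\<^bsub>G\<^esub>}" and "\<And>k. k < c \<Longrightarrow> gamma G (Suc k) \<noteq> {\<one>\<^bsub>G\<^esub>}"
  shows "nilpotency_class G = c"
  unfolding nilpotency_class_def by (rule Least_equality) (use assms in \<open>auto simp: not_less[symmetric]\<close>)

section \<open>Direct products of groups\<close>

definition factor_embedding :: "'i set \<Rightarrow> ('i \<Rightarrow> ('a, 'b) monoid_scheme) \<Rightarrow> 'i \<Rightarrow> 'a \<Rightarrow> 'i \<Rightarrow> 'a" where
  "factor_embedding I F i u = (\<lambda>j\<in>I. if j = i then u else \<one>\<^bsub>F j\<^esub>)"

context
  fixes I :: "'i set" and F :: "'i \<Rightarrow> ('a, 'b) monoid_scheme"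
  assumes groups: "\<And>i. i \<in> I \<Longrightarrow> group (F i)"
begin

lemma comm_product_group:
  assumes "x \<in> carrier (product_group I F)" "y \<in> carrier (product_group I F)"
  shows "comm (product_group I F) x y = (\<lambda>i\<in>I. comm (F i) (x i) (y i))"
  using assms groups by (simp add: comm_def fun_eq_iff)

lemma gamma_product_group_subset:
  "gamma (product_group I F) (Suc k) \<subseteq> (\<Pi>\<^sub>E i\<in>I. gamma (F i) (Suc k))"
proof (induction k)
  case 0
  show ?case by simp
next
  case (Suc k)
  have "subgroup (\<Pi>\<^sub>E i\<in>I. gamma (F i) (Suc (Suc k))) (product_group I F)"
    by (simp only: PiE_subgroup_product_group[OF groups]) (blast intro: subgroup_gamma groups)
  moreover have "comm (product_group I F) x y \<in> (\<Pi>\<^sub>E i\<in>I. gamma (F i) (Suc (Suc k)))"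
    if x: "x \<in> gamma (product_group I F) (Suc k)" and y: "y \<in> carrier (product_group I F)" for x y
  proof -
    have "x \<in> carrier (product_group I F)"
      using x groups subgroup.mem_carrier[OF subgroup_gamma] by (metis product_group)
    moreover have "comm (F i) (x i) (y i) \<in> gamma (F i) (Suc (Suc k))" if "i \<in> I" for i
    proof -
      have "x i \<in> gamma (F i) (Suc k)" "y i \<in> carrier (F i)" using x y Suc.IH that by auto
      then show ?thesis by (auto intro: generate.incl)
    qed
    ultimately show ?thesis using y by (simp add: comm_product_group)
  qed
  ultimately have "generate (product_group I F) {comm (product_group I F) x y | x y.
      x \<in> gamma (product_group I F) (Suc k) \<and> y \<in> carrier (product_group I F)}
      \<subseteq> (\<Pi>\<^sub>E i\<in>I. gamma (F i) (Suc (Suc k)))"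
    by (intro group.generate_subgroup_incl[OF product_group[OF groups]]) blast+
  then show ?case by (simp only: gamma.simps)
qed

lemma factor_embedding_hom:
  assumes i: "i \<in> I"
  shows "group_hom (F i) (product_group I F) (factor_embedding I F i)"
proof -
  have "factor_embedding I F i \<in> hom (F i) (product_group I F)"
    using i groups by (auto simp: hom_def factor_embedding_def group.is_monoid fun_eq_iff)
  then show ?thesis using i groups by (simp add: group_hom_def group_hom_axioms_def)
qed

lemma factor_embedding_gamma:
  assumes i: "i \<in> I"
  shows "factor_embedding I F i ` gamma (F i) (Suc k) \<subseteq> gamma (product_group I F) (Suc k)"
proof (induction k)
  case 0
  show ?case using group_hom.hom_closed[OF factor_embedding_hom[OF i]] by auto
next
  case (Suc k)
  interpret group_hom "F i" "product_group I F" "factor_embedding I F i"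
    by (rule factor_embedding_hom[OF i])
  let ?e = "factor_embedding I F i"
  let ?C = "{comm (F i) x y | x y. x \<in> gamma (F i) (Suc k) \<and> y \<in> carrier (F i)}"
  have C: "?C \<subseteq> carrier (F i)"
    using subgroup.mem_carrier[OF subgroup_gamma[OF G.is_group]] by (auto intro: comm_closed G.is_group)
  have "?e ` ?C \<subseteq> {comm (product_group I F) x y | x y.
          x \<in> gamma (product_group I F) (Suc k) \<and> y \<in> carrier (product_group I F)}"
  proof clarify
    fix x y assume x: "x \<in> gamma (F i) (Suc k)" and y: "y \<in> carrier (F i)"
    have "x \<in> carrier (F i)" using x subgroup.mem_carrier[OF subgroup_gamma[OF G.is_group]] by blast
    then have "?e (comm (F i) x y) = comm (product_group I F) (?e x) (?e y)"
      using y by (rule hom_comm[OF group_hom_axioms])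
    moreover have "?e x \<in> gamma (product_group I F) (Suc k)" using Suc.IH x by blast
    ultimately show "\<exists>x' y'. ?e (comm (F i) x y) = comm (product_group I F) x' y' \<and>
        x' \<in> gamma (product_group I F) (Suc k) \<and> y' \<in> carrier (product_group I F)"
      using y by (blast intro: hom_closed)
  qed
  then have "generate (product_group I F) (?e ` ?C) \<subseteq> gamma (product_group I F) (Suc (Suc k))"
    by (simp add: H.mono_generate)
  then show ?case by (simp add: generate_img[OF C])
qed

lemma residually_nilpotent_product_group:
  assumes "\<And>i. i \<in> I \<Longrightarrow> nilpotent_grp (F i)"
  shows "residually_nilpotent (product_group I F)"
  unfolding residually_nilpotent_def
proof (intro equalityI subsetI)
  fix x assume x: "x \<in> (\<Inter>k\<in>{1..}. gamma (product_group I F) k)"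
  have "x i = \<one>\<^bsub>F i\<^esub>" if i: "i \<in> I" for i
  proof -
    obtain c where c: "gamma (F i) (Suc c) = {\<one>\<^bsub>F i\<^esub>}"
      using assms[OF i] unfolding nilpotent_grp_def by blast
    have "x \<in> gamma (product_group I F) (Suc c)" by (rule INT_D[OF x]) simp
    then show ?thesis using gamma_product_group_subset i c by (auto simp: PiE_iff)
  qed
  moreover have "x \<in> gamma (product_group I F) (Suc 0)" by (rule INT_D[OF x]) simp
  then have "x \<in> extensional I" by (simp add: PiE_iff)
  ultimately have "x = (\<lambda>i\<in>I. \<one>\<^bsub>F i\<^esub>)" by (intro extensionalityI[where A = I]) auto
  then show "x \<in> {\<one>\<^bsub>product_group I F\<^esub>}" by simp
next
  fix x assume "x \<in> {\<one>\<^bsub>product_group I F\<^esub>}"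
  moreover have "\<one>\<^bsub>product_group I F\<^esub> \<in> gamma (product_group I F) k" for k
    using subgroup.one_closed[OF subgroup_gamma[OF product_group[OF groups]]] .
  ultimately show "x \<in> (\<Inter>k\<in>{1..}. gamma (product_group I F) k)" by blast
qed

lemma not_nilpotent_product_group:
  assumes "\<And>c. \<exists>i\<in>I. gamma (F i) (Suc c) \<noteq> {\<one>\<^bsub>F i\<^esub>}"
  shows "\<not> nilpotent_grp (product_group I F)"
proof
  assume "nilpotent_grp (product_group I F)"
  then obtain c where c: "gamma (product_group I F) (Suc c) = {\<one>\<^bsub>product_group I F\<^esub>}"
    unfolding nilpotent_grp_def by blast
  obtain i where i: "i \<in> I" and nontrivial: "gamma (F i) (Suc c) \<noteq> {\<one>\<^bsub>F i\<^esub>}"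
    using assms by blast
  have "u = \<one>\<^bsub>F i\<^esub>" if "u \<in> gamma (F i) (Suc c)" for u
  proof -
    have "factor_embedding I F i u = \<one>\<^bsub>product_group I F\<^esub>"
      using factor_embedding_gamma[OF i, of c] c that by blast
    then have "factor_embedding I F i u i = \<one>\<^bsub>product_group I F\<^esub> i" by simp
    then show ?thesis using i by (simp add: factor_embedding_def)
  qed
  moreover have "\<one>\<^bsub>F i\<^esub> \<in> gamma (F i) (Suc c)"
    using groups[OF i] by (simp add: subgroup.one_closed subgroup_gamma)
  ultimately show False using nontrivial by blast
qed

lemma commutators_with_product_group:
  assumes w: "w \<in> carrier (product_group I F)"
  shows "commutators_with (product_group I F) w = (\<Pi>\<^sub>E i\<in>I. commutators_with (F i) (w i))"
proof (intro equalityI subsetI)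
  fix x assume "x \<in> commutators_with (product_group I F) w"
  then obtain z where "z \<in> carrier (product_group I F)" "x = comm (product_group I F) z w"
    unfolding commutators_with_def by blast
  then show "x \<in> (\<Pi>\<^sub>E i\<in>I. commutators_with (F i) (w i))"
    using w by (auto simp: comm_product_group commutators_with_def)
next
  fix x assume x: "x \<in> (\<Pi>\<^sub>E i\<in>I. commutators_with (F i) (w i))"
  then have "\<forall>i\<in>I. \<exists>z\<in>carrier (F i). x i = comm (F i) z (w i)"
    by (auto simp: commutators_with_def)
  then obtain f where f: "\<And>i. i \<in> I \<Longrightarrow> f i \<in> carrier (F i) \<and> x i = comm (F i) (f i) (w i)"
    by metis
  have z: "restrict f I \<in> carrier (product_group I F)" using f by simp
  have "x = (\<lambda>i\<in>I. comm (F i) (f i) (w i))"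
    by (intro extensionalityI[where A = I]) (use f x in \<open>auto simp: PiE_iff\<close>)
  then have "x = comm (product_group I F) (restrict f I) w"
    by (auto simp: comm_product_group[OF z w] intro!: restrict_ext)
  then show "x \<in> commutators_with (product_group I F) w"
    using z unfolding commutators_with_def by blast
qed

lemma subgroup_commutators_with_product_group:
  assumes "\<And>i w. i \<in> I \<Longrightarrow> w \<in> carrier (F i) \<Longrightarrow> subgroup (commutators_with (F i) w) (F i)"
    and "w \<in> carrier (product_group I F)"
  shows "subgroup (commutators_with (product_group I F) w) (product_group I F)"
  using assms groups by (auto simp: commutators_with_product_group PiE_subgroup_product_group)

end

section \<open>The groups G(p,n)\<close>

locale Gpn_odd_prime =
  fixes p n :: nat
  assumes prime: "Factorial_Ring.prime p" and odd: "p > 2" and n_ge_2: "n \<ge> 2"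
begin

abbreviation "G \<equiv> Gpn p n"
abbreviation "N \<equiv> p^n"
abbreviation "M \<equiv> p^(n-1)"
abbreviation "q \<equiv> int (p+1)"

text \<open>\<open>elem A B\<close> is x^A y^B for an arbitrary integer exponent A.\<close>

definition elem :: "int \<Rightarrow> nat \<Rightarrow> nat \<times> nat" where
  "elem A B = (nat (A mod int N), B mod M)"

lemma M_gt_1: "M > 1"
  using odd n_ge_2 by (intro one_less_power) auto

lemma M_minus_1_mult: "(M - 1) * B + B = M * B"
  using M_gt_1 by (simp add: algebra_simps)

lemma N_eq_Suc: "N = p^Suc (n-1)"
  using n_ge_2 by (cases n) auto

lemma q_power_M_cong: "[q^M = 1] (mod int N)"
proof -
  have "[(p+1)^M = 1] (mod N)"
    unfolding N_eq_Suc by (rule Suc_prime_power_cong_one[OF prime odd])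
  then have "[int ((p+1)^M) = int 1] (mod int N)" by (simp only: cong_int_iff)
  then show ?thesis by simp
qed

lemma q_power_cong:
  assumes "[B = B'] (mod M)"
  shows "[q^B = q^B'] (mod int N)"
proof -
  have q_power_mod: "[q^B = q^(B mod M)] (mod int N)" for B
  proof -
    have "q^B = q^(M * (B div M) + B mod M)" by (simp only: mult_div_mod_eq)
    also have "\<dots> = (q^M)^(B div M) * q^(B mod M)" by (simp only: power_add power_mult)
    also have "[\<dots> = 1^(B div M) * q^(B mod M)] (mod int N)"
      by (intro cong_mult cong_pow q_power_M_cong cong_refl)
    finally show ?thesis by simp
  qed
  from assms have "B mod M = B' mod M" by (simp add: cong_def)
  then show ?thesis using q_power_mod[of B] q_power_mod[of B'] cong_sym cong_trans by metis
qed

lemma q_power_inverse_cong: "[q^((M-1)*B) * q^B = 1] (mod int N)"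
proof -
  have "[(M-1)*B + B = 0] (mod M)" unfolding M_minus_1_mult cong_def by simp
  then have "[q^((M-1)*B + B) = q^0] (mod int N)" by (rule q_power_cong)
  then show ?thesis by (simp add: power_add)
qed

lemma carrier_Gpn: "carrier G = {0..<N} \<times> {0..<M}"
  by (simp add: Gpn_def)

lemma elem_carrier: "elem A B \<in> carrier G"
  using M_gt_1 prime_gt_0_nat[OF prime] by (simp add: carrier_Gpn elem_def nat_less_iff)

lemma carrier_elemE:
  assumes "x \<in> carrier G"
  obtains A B where "x = elem A B"
proof
  show "x = elem (int (fst x)) (snd x)" using assms by (auto simp: carrier_Gpn elem_def)
qed

lemma elem_eqI: "[A = A'] (mod int N) \<Longrightarrow> [B = B'] (mod M) \<Longrightarrow> elem A B = elem A' B'"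
  by (simp add: elem_def cong_def)

lemma one_elem: "\<one>\<^bsub>G\<^esub> = elem 0 0"
  by (simp add: Gpn_def elem_def)

lemma elem_int: "elem (int a) b = (a mod N, b mod M)"
  unfolding elem_def by (metis nat_int of_nat_mod)

lemma mult_elem: "elem A B \<otimes>\<^bsub>G\<^esub> elem C D = elem (A + q^B * C) (B + D)"
proof -
  obtain a c where a: "A mod int p^n = int a" and c: "C mod int p^n = int c"
    using prime_gt_0_nat[OF prime] by (metis pos_mod_sign nonneg_int_cases of_nat_0_less_iff zero_less_power)
  have "elem A B \<otimes>\<^bsub>G\<^esub> elem C D = ((a + (p+1)^(B mod M) * c) mod N, (B mod M + D mod M) mod M)"
    by (simp add: Gpn_def elem_def a c)
  also have "\<dots> = elem (int (a + (p+1)^(B mod M) * c)) (B mod M + D mod M)"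
    by (simp only: elem_int)
  also have "\<dots> = elem (A + q^B * C) (B + D)"
  proof (rule elem_eqI)
    have "int (a + (p+1)^(B mod M) * c) = A mod int N + q^(B mod M) * (C mod int N)"
      using a c by simp
    also have "[\<dots> = A + q^B * C] (mod int N)"
      by (intro cong_add cong_mult q_power_cong) (simp_all add: cong_def)
    finally show "[int (a + (p+1)^(B mod M) * c) = A + q^B * C] (mod int N)" .
  qed (simp add: cong_def mod_add_eq)
  finally show ?thesis .
qed

lemma elem_inverse: "elem (-(q^((M-1)*B) * A)) ((M-1)*B) \<otimes>\<^bsub>G\<^esub> elem A B = \<one>\<^bsub>G\<^esub>"
  unfolding mult_elem one_elem M_minus_1_mult by (rule elem_eqI) (simp_all add: cong_def)

lemma group_Gpn: "group G"
proof (rule groupI)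
  show "x \<otimes>\<^bsub>G\<^esub> y \<in> carrier G" if "x \<in> carrier G" "y \<in> carrier G" for x y
    using that by (elim carrier_elemE) (simp add: mult_elem elem_carrier)
  show "x \<otimes>\<^bsub>G\<^esub> y \<otimes>\<^bsub>G\<^esub> z = x \<otimes>\<^bsub>G\<^esub> (y \<otimes>\<^bsub>G\<^esub> z)"
    if "x \<in> carrier G" "y \<in> carrier G" "z \<in> carrier G" for x y z
    using that by (elim carrier_elemE) (simp add: mult_elem algebra_simps power_add)
  show "\<one>\<^bsub>G\<^esub> \<otimes>\<^bsub>G\<^esub> x = x" if "x \<in> carrier G" for x
    using that by (elim carrier_elemE) (simp add: one_elem mult_elem)
  show "\<exists>y\<in>carrier G. y \<otimes>\<^bsub>G\<^esub> x = \<one>\<^bsub>G\<^esub>" if "x \<in> carrier G" for x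
    using that by (elim carrier_elemE) (use elem_inverse elem_carrier in blast)
qed (simp add: one_elem elem_carrier)

lemma inv_elem: "inv\<^bsub>G\<^esub> (elem A B) = elem (-(q^((M-1)*B) * A)) ((M-1)*B)"
  using group.inv_equality[OF group_Gpn elem_inverse elem_carrier elem_carrier] .

text \<open>Here and below \<open>q^((M-1)*B)\<close> plays the role of q^-B, see \<open>q_power_inverse_cong\<close>.\<close>

lemma comm_elem:
  "comm G (elem A B) (elem C D) = elem (q^((M-1)*B) * q^((M-1)*D) * ((q^B - 1)*C - (q^D - 1)*A)) 0"
proof -
  define u v where "u = q^((M-1)*B)" and "v = q^((M-1)*D)"
  have "comm G (elem A B) (elem C D)
      = elem (u*v*((q^B - 1)*C - (q^D - 1)*A) + u*A*(v*q^D - 1)) ((M-1)*B + (M-1)*D + B + D)"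
    unfolding comm_def inv_elem mult_elem u_def v_def by (simp add: algebra_simps power_add)
  also have "\<dots> = elem (u*v*((q^B - 1)*C - (q^D - 1)*A)) 0"
  proof (rule elem_eqI)
    have "[u*v*((q^B - 1)*C - (q^D - 1)*A) + u*A*(v*q^D - 1)
        = u*v*((q^B - 1)*C - (q^D - 1)*A) + u*A*(1 - 1)] (mod int N)"
      unfolding v_def by (intro cong_add cong_mult cong_diff cong_refl q_power_inverse_cong)
    then show "[u*v*((q^B - 1)*C - (q^D - 1)*A) + u*A*(v*q^D - 1)
        = u*v*((q^B - 1)*C - (q^D - 1)*A)] (mod int N)" by simp
    have "(M-1)*B + (M-1)*D + B + D = M * (B + D)"
      using M_minus_1_mult[of B] M_minus_1_mult[of D] by (simp add: algebra_simps)
    then show "[(M-1)*B + (M-1)*D + B + D = 0] (mod M)" by (simp add: cong_def)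
  qed
  finally show ?thesis unfolding u_def v_def .
qed

definition x_lattice :: "int \<Rightarrow> int \<Rightarrow> (nat \<times> nat) set" where
  "x_lattice a b = {elem (a * s + b * t) 0 | s t. True}"

lemma x_lattice_memI: "c = a * s + b * t \<Longrightarrow> elem c 0 \<in> x_lattice a b"
  unfolding x_lattice_def by blast

lemma subgroup_x_lattice: "subgroup (x_lattice a b) G"
proof (rule group.subgroupI[OF group_Gpn])
  show "x_lattice a b \<subseteq> carrier G" unfolding x_lattice_def using elem_carrier by blast
  show "x_lattice a b \<noteq> {}" unfolding x_lattice_def by blast
  show "inv\<^bsub>G\<^esub> x \<in> x_lattice a b" if x: "x \<in> x_lattice a b" for x
  proof -
    obtain s t where "x = elem (a * s + b * t) 0" using x unfolding x_lattice_def by blast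
    then show ?thesis by (simp add: inv_elem x_lattice_memI[where s = "-s" and t = "-t"])
  qed
  show "x \<otimes>\<^bsub>G\<^esub> y \<in> x_lattice a b" if xy: "x \<in> x_lattice a b" "y \<in> x_lattice a b" for x y
  proof -
    obtain s t s' t' where "x = elem (a * s + b * t) 0" "y = elem (a * s' + b * t') 0"
      using xy unfolding x_lattice_def by blast
    then show ?thesis
      by (simp add: mult_elem x_lattice_memI[where s = "s + s'" and t = "t + t'"] algebra_simps)
  qed
qed

lemma prime_dvd_q_power_minus_1: "int p dvd q^B - 1"
proof -
  have "[q^B = 1^B] (mod int p)" by (intro cong_pow) (simp add: cong_def)
  then show ?thesis by (simp add: cong_iff_dvd_diff)
qed

lemma comm_mem_x_lattice_prime:
  assumes "x \<in> carrier G" "y \<in> carrier G"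
  shows "comm G x y \<in> x_lattice (int p) 0"
proof -
  obtain A B C D where x: "x = elem A B" and y: "y = elem C D"
    using assms by (elim carrier_elemE)
  obtain t t' where t: "q^B - 1 = int p * t" and t': "q^D - 1 = int p * t'"
    using prime_dvd_q_power_minus_1 by (meson dvdE)
  show ?thesis unfolding x y comm_elem t t'
    by (rule x_lattice_memI[where s = "q^((M-1)*B) * q^((M-1)*D) * (t*C - t'*A)" and t = 0])
       (simp add: algebra_simps)
qed

lemma comm_mem_x_lattice_prime_power:
  assumes "x \<in> x_lattice (int p^k) 0" "y \<in> carrier G"
  shows "comm G x y \<in> x_lattice (int p^Suc k) 0"
proof -
  obtain s where x: "x = elem (int p^k * s) 0" using assms(1) unfolding x_lattice_def by auto
  obtain C D where y: "y = elem C D" using assms(2) by (elim carrier_elemE)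
  obtain t where t: "q^D - 1 = int p * t" using prime_dvd_q_power_minus_1 by (meson dvdE)
  show ?thesis unfolding x y comm_elem t
    by (rule x_lattice_memI[where s = "-(q^((M-1)*D) * t * s)" and t = 0]) (simp add: algebra_simps)
qed

lemma gamma_Suc_Suc_subset_x_lattice: "gamma G (Suc (Suc k)) \<subseteq> x_lattice (int p^Suc k) 0"
proof (induction k)
  case 0
  have "{comm G x y | x y. x \<in> gamma G (Suc 0) \<and> y \<in> carrier G} \<subseteq> x_lattice (int p^Suc 0) 0"
    using comm_mem_x_lattice_prime by auto
  then show ?case
    by (simp only: gamma.simps(3)) (rule group.generate_subgroup_incl[OF group_Gpn _ subgroup_x_lattice])
next
  case (Suc k)
  have "{comm G x y | x y. x \<in> gamma G (Suc (Suc k)) \<and> y \<in> carrier G} \<subseteq> x_lattice (int p^Suc (Suc k)) 0"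
    using Suc.IH comm_mem_x_lattice_prime_power by blast
  then show ?case
    by (simp only: gamma.simps) (rule group.generate_subgroup_incl[OF group_Gpn _ subgroup_x_lattice])
qed

lemma gamma_Suc_n: "gamma G (Suc n) = {\<one>\<^bsub>G\<^esub>}"
proof
  have "x_lattice (int p^n) 0 \<subseteq> {\<one>\<^bsub>G\<^esub>}"
    unfolding x_lattice_def one_elem by (auto intro!: elem_eqI simp: cong_def)
  then show "gamma G (Suc n) \<subseteq> {\<one>\<^bsub>G\<^esub>}"
    using gamma_Suc_Suc_subset_x_lattice[of "n - 1"] n_ge_2 by (simp add: Suc_diff_Suc)
  show "{\<one>\<^bsub>G\<^esub>} \<subseteq> gamma G (Suc n)"
    using subgroup.one_closed[OF subgroup_gamma[OF group_Gpn]] by blast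
qed

lemma M_minus_1_squared_cong: "[(M-1)*(M-1) = 1] (mod M)"
proof -
  have "M = Suc (M-1)" using M_gt_1 by simp
  then show ?thesis using cong_pred_square_one[of "M-1"] by simp
qed

lemma comm_x_power_y_inverse: "comm G (elem (int p^k) 0) (elem 0 (M-1)) = elem (int p^Suc k) 0"
proof -
  have "comm G (elem (int p^k) 0) (elem 0 (M-1)) = elem (q^((M-1)*(M-1)) * (1 - q^(M-1)) * int p^k) 0"
    unfolding comm_elem by (simp add: algebra_simps)
  also have "\<dots> = elem (int p^Suc k) 0"
  proof (rule elem_eqI)
    have "[q^((M-1)*(M-1)) * (1 - q^(M-1)) * int p^k = q^1 * (1 - q^(M-1)) * int p^k] (mod int N)"
      by (intro cong_mult cong_refl q_power_cong M_minus_1_squared_cong)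
    also have "q^1 * (1 - q^(M-1)) * int p^k = (q - q^M) * int p^k"
    proof -
      have "M = Suc (M-1)" using M_gt_1 by simp
      then have "q^M = q * q^(M-1)" by (metis power_Suc)
      then show ?thesis by (simp add: algebra_simps)
    qed
    also have "[\<dots> = (q - 1) * int p^k] (mod int N)"
      by (intro cong_mult cong_diff cong_refl q_power_M_cong)
    finally show "[q^((M-1)*(M-1)) * (1 - q^(M-1)) * int p^k = int p^Suc k] (mod int N)" by simp
  qed simp
  finally show ?thesis .
qed

lemma x_power_mem_gamma: "elem (int p^k) 0 \<in> gamma G (Suc k)"
proof (induction k)
  case 0
  show ?case by (simp add: elem_carrier)
next
  case (Suc k)
  then have "comm G (elem (int p^k) 0) (elem 0 (M-1))
      \<in> {comm G x y | x y. x \<in> gamma G (Suc k) \<and> y \<in> carrier G}"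
    using elem_carrier by blast
  then show ?case by (simp only: gamma.simps comm_x_power_y_inverse) (rule generate.incl)
qed

lemma x_power_ne_one: "k < n \<Longrightarrow> elem (int p^k) 0 \<noteq> \<one>\<^bsub>G\<^esub>"
proof -
  assume "k < n"
  then have "int p^k < int p^n" using odd by (intro power_strict_increasing) auto
  then have "elem (int p^k) 0 = (p^k, 0)" by (simp add: elem_def nat_power_eq)
  then show ?thesis using odd by (simp add: Gpn_def)
qed

lemma gamma_Suc_nontrivial: "k < n \<Longrightarrow> gamma G (Suc k) \<noteq> {\<one>\<^bsub>G\<^esub>}"
  using x_power_mem_gamma x_power_ne_one by blast

lemma nilpotent_Gpn: "nilpotent_grp G"
  unfolding nilpotent_grp_def using gamma_Suc_n by blast

lemma nilpotency_class_Gpn: "nilpotency_class G = n"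
  using gamma_Suc_n gamma_Suc_nontrivial by (rule nilpotency_class_eqI)

lemma commutators_with_elem:
  "commutators_with G (elem C D) = x_lattice (q^((M-1)*D) * int p * C) (q^((M-1)*D) * (q^D - 1))"
proof (intro equalityI subsetI)
  fix x assume "x \<in> commutators_with G (elem C D)"
  then obtain A B where x: "x = comm G (elem A B) (elem C D)"
    unfolding commutators_with_def by (auto elim: carrier_elemE)
  obtain t where t: "q^B - 1 = int p * t" using prime_dvd_q_power_minus_1 by (meson dvdE)
  show "x \<in> x_lattice (q^((M-1)*D) * int p * C) (q^((M-1)*D) * (q^D - 1))"
    unfolding x comm_elem t
    by (rule x_lattice_memI[where s = "q^((M-1)*B) * t" and t = "-(q^((M-1)*B) * A)"])
       (simp add: algebra_simps)
next
  fix x assume "x \<in> x_lattice (q^((M-1)*D) * int p * C) (q^((M-1)*D) * (q^D - 1))"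
  then obtain s y where x: "x = elem (q^((M-1)*D) * int p * C * s + q^((M-1)*D) * (q^D - 1) * y) 0"
    unfolding x_lattice_def by blast
  \<comment> \<open>choose B with q^-B = 1 - p s (mod p^n) and A = -q^B y\<close>
  have "int N = int p ^ Suc (n-1)" unfolding N_eq_Suc by simp
  then obtain b where b: "[q^b = 1 + int p * (-s)] (mod int N)"
    using ex_Suc_prime_power_cong[OF prime odd, of "-s" "n-1"] by metis
  define B where "B = (M-1)*b"
  define A where "A = -(q^B * y)"
  define u where "u = q^((M-1)*B)"
  have "[(M-1)*B = b] (mod M)"
    using cong_mult[OF M_minus_1_squared_cong cong_refl, of b] by (simp add: B_def mult.assoc)
  then have "[u = q^b] (mod int N)" unfolding u_def by (rule q_power_cong)
  then have u: "[u = 1 - int p * s] (mod int N)"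
    using b by (metis cong_trans diff_conv_add_uminus mult_minus_right)
  have "q^((M-1)*B) * q^((M-1)*D) * ((q^B - 1)*C - (q^D - 1)*A)
      = q^((M-1)*D) * ((u * q^B - u) * C + (q^D - 1) * (u * q^B) * y)"
    unfolding u_def A_def by (simp add: algebra_simps)
  also have "[\<dots> = q^((M-1)*D) * ((1 - (1 - int p * s)) * C + (q^D - 1) * 1 * y)] (mod int N)"
    unfolding u_def by (intro cong_mult cong_add cong_diff cong_refl q_power_inverse_cong u[unfolded u_def])
  finally have "comm G (elem A B) (elem C D) = x"
    unfolding comm_elem x by (intro elem_eqI) (simp_all add: algebra_simps)
  then show "x \<in> commutators_with G (elem C D)"
    unfolding commutators_with_def using elem_carrier by blast
qed

lemma subgroup_commutators_with: "w \<in> carrier G \<Longrightarrow> subgroup (commutators_with G w) G"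
  by (elim carrier_elemE) (simp add: commutators_with_elem subgroup_x_lattice)

lemma subgroup_twisted_class_e_inner_auts: "\<forall>\<phi>\<in>inner_auts G. subgroup (twisted_class_e G \<phi>) G"
  using group_Gpn subgroup_commutators_with by (rule subgroup_twisted_class_e_inner_autsI)

end

lemma prime_nth_prime: "Factorial_Ring.prime (nth_prime n)"
  using enumerate_in_set[OF primes_infinite] unfolding nth_prime_def by simp

lemma nth_prime_gt_2: "n > 1 \<Longrightarrow> nth_prime n > 2"
proof -
  assume "n > 1"
  then have "enumerate {p::nat. Factorial_Ring.prime p} 0 < nth_prime n"
    unfolding nth_prime_def by (intro enumerate_mono primes_infinite) simp
  moreover have "enumerate {p::nat. Factorial_Ring.prime p} 0 \<ge> 2"
    using enumerate_in_set[OF primes_infinite] by (simp add: prime_ge_2_nat)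
  ultimately show ?thesis by linarith
qed

theorem mainTheorem14:
  shows "(\<forall>(p::nat) (n::nat). Factorial_Ring.prime p \<and> p > 2 \<and> n > 2 \<longrightarrow>
            group (Gpn p n) \<and> finite (carrier (Gpn p n)) \<and>
            nilpotent_grp (Gpn p n) \<and> nilpotency_class (Gpn p n) \<ge> n - 1 \<and>
            (\<forall>\<phi>\<in>inner_auts (Gpn p n). subgroup (twisted_class_e (Gpn p n) \<phi>) (Gpn p n)))
       \<and> (let G = product_group {n::nat. n > 2} (\<lambda>n. Gpn (nth_prime n) n) in
            group G \<and> residually_nilpotent G \<and> \<not> nilpotent_grp G \<and>
            (\<forall>\<phi>\<in>inner_auts G. subgroup (twisted_class_e G \<phi>) G))"
proof -
  have "group (Gpn p n) \<and> finite (carrier (Gpn p n)) \<and> nilpotent_grp (Gpn p n) \<and>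
      nilpotency_class (Gpn p n) \<ge> n - 1 \<and>
      (\<forall>\<phi>\<in>inner_auts (Gpn p n). subgroup (twisted_class_e (Gpn p n) \<phi>) (Gpn p n))"
    if "Factorial_Ring.prime p" "p > 2" "n > 2" for p n
  proof -
    interpret Gpn_odd_prime p n using that by unfold_locales auto
    show ?thesis using group_Gpn nilpotent_Gpn nilpotency_class_Gpn subgroup_twisted_class_e_inner_auts
      by (simp add: carrier_Gpn)
  qed
  moreover define I F where "I = {n::nat. n > 2}" and "F = (\<lambda>n. Gpn (nth_prime n) n)"
  have factors: "Gpn_odd_prime (nth_prime i) i" if "i \<in> I" for i
    using that prime_nth_prime nth_prime_gt_2 unfolding I_def by unfold_locales auto
  then have groups: "group (F i)" and nilpotent: "nilpotent_grp (F i)"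
    and commutators: "\<And>w. w \<in> carrier (F i) \<Longrightarrow> subgroup (commutators_with (F i) w) (F i)"
    if "i \<in> I" for i
    using that Gpn_odd_prime.group_Gpn Gpn_odd_prime.nilpotent_Gpn
      Gpn_odd_prime.subgroup_commutators_with unfolding F_def by blast+
  have "\<exists>i\<in>I. gamma (F i) (Suc c) \<noteq> {\<one>\<^bsub>F i\<^esub>}" for c
    using Gpn_odd_prime.gamma_Suc_nontrivial[OF factors, of "c + 3" c] unfolding I_def F_def by auto
  then have "\<not> nilpotent_grp (product_group I F)"
    using not_nilpotent_product_group[of I F] groups by blast
  moreover have "residually_nilpotent (product_group I F)"
    by (rule residually_nilpotent_product_group[OF groups nilpotent])
  moreover have "\<forall>\<phi>\<in>inner_auts (product_group I F).
      subgroup (twisted_class_e (product_group I F) \<phi>) (product_group I F)"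
    using groups commutators
    by (intro subgroup_twisted_class_e_inner_autsI subgroup_commutators_with_product_group) auto
  moreover have "group (product_group I F)" by (rule product_group) (rule groups)
  ultimately show ?thesis unfolding I_def F_def Let_def by blast
qed

end
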